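(* Let $G$ be a simplicial group and $c\in C_n(EG)$. (i) For any $0\le k\le n+1$, $P^{n+1}_k(Sc)=e_0\otimes Sc$ if $k=0$, and $P^{n+1}_k(Sc)=(S\otimes1)P^n_{k-1}(c)$ if $k>0$. (ii) $\Delta\,Sc=(S\otimes1)\,\Delta c+e_0\otimes Sc$.
   Context: Chains are normalized, with Alexander–Whitney diagonal $\Delta$. $EG$ is the simplicial set with $p$-simplices $(g_p,[g_{p-1},\dots,g_0])\in G_p\times G_{p-1}\times\dots\times G_0$, faces $\partial_k(g_p,[g_{p-1},\dots,g_0])=(\partial_kg_p,[\partial_{k-1}g_{p-1},\dots,\partial_1g_{p-k+1},(\partial_0g_{p-k})g_{p-k-1},g_{p-k-2},\dots,g_0])$ (for $k=0$: $((\partial_0g_p)g_{p-1},[g_{p-2},\dots,g_0])$; for $k=p$: $(\partial_pg_p,[\partial_{p-1}g_{p-1},\dots,\partial_1g_1])$) and degeneracies $s_k(g_p,[\dots])=(s_kg_p,[s_{k-1}g_{p-1},\dots,s_0g_{p-k},1_{p-k},g_{p-k-1},\dots,g_0])$; $e_0=(1_0,[\,])$. $S\colon EG_p\to EG_{p+1}$, $S(g_p,[g_{p-1},\dots,g_0])=(1_{p+1},[g_p,g_{p-1},\dots,g_0])$, extended linearly to $C(EG)$. $P^n_k\colon C_n\to C_k\otimes C_{n-k}$, $\sigma\mapsto\sigma(0,\dots,k)\otimes\sigma(k,\dots,n)$. *)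

theory Defs
  imports "HOL-Algebra.Group"
begin

definition simplicial_group ::
  "(nat \<Rightarrow> 'a monoid) \<Rightarrow> (nat \<Rightarrow> nat \<Rightarrow> 'a \<Rightarrow> 'a) \<Rightarrow> (nat \<Rightarrow> nat \<Rightarrow> 'a \<Rightarrow> 'a) \<Rightarrow> bool" where
  "simplicial_group G d s \<longleftrightarrow>
     (\<forall>p. group (G p)) \<and>
     (\<forall>p k. k \<le> Suc p \<longrightarrow> d (Suc p) k \<in> hom (G (Suc p)) (G p)) \<and>
     (\<forall>p k. k \<le> p \<longrightarrow> s p k \<in> hom (G p) (G (Suc p))) \<and>
     (\<forall>p i j x. x \<in> carrier (G (Suc (Suc p))) \<and> i < j \<and> j \<le> Suc (Suc p) \<longrightarrow>
        d (Suc p) i (d (Suc (Suc p)) j x) = d (Suc p) (j - 1) (d (Suc (Suc p)) i x)) \<and>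
     (\<forall>p i j x. x \<in> carrier (G (Suc p)) \<and> i < j \<and> j \<le> Suc p \<longrightarrow>
        d (Suc (Suc p)) i (s (Suc p) j x) = s p (j - 1) (d (Suc p) i x)) \<and>
     (\<forall>q j x. x \<in> carrier (G q) \<and> j \<le> q \<longrightarrow>
        d (Suc q) j (s q j x) = x \<and> d (Suc q) (Suc j) (s q j x) = x) \<and>
     (\<forall>p i j x. x \<in> carrier (G (Suc p)) \<and> Suc j < i \<and> i \<le> Suc (Suc p) \<longrightarrow>
        d (Suc (Suc p)) i (s (Suc p) j x) = s p j (d (Suc p) (i - 1) x)) \<and>
     (\<forall>q i j x. x \<in> carrier (G q) \<and> i \<le> j \<and> j \<le> q \<longrightarrow>
        s (Suc q) i (s q j x) = s (Suc q) (Suc j) (s q i x))"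

text \<open>A p-simplex (g_p,[g_{p-1},...,g_0]) of EG is encoded as the list [g_p, g_{p-1}, ..., g_0]
  of length p+1, so that xs ! i = g_{p-i} \<in> G_{p-i}.\<close>

definition EG_simplices :: "(nat \<Rightarrow> 'a monoid) \<Rightarrow> nat \<Rightarrow> 'a list set" where
  "EG_simplices G p = {xs. length xs = Suc p \<and> (\<forall>i\<le>p. xs ! i \<in> carrier (G (p - i)))}"

definition EG_face ::
  "(nat \<Rightarrow> 'a monoid) \<Rightarrow> (nat \<Rightarrow> nat \<Rightarrow> 'a \<Rightarrow> 'a) \<Rightarrow> nat \<Rightarrow> 'a list \<Rightarrow> 'a list" where
  "EG_face G d k xs = (let p = length xs - 1 in
     if k = p then map (\<lambda>i. d (p - i) (k - i) (xs ! i)) [0..<p]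
     else map (\<lambda>i. d (p - i) (k - i) (xs ! i)) [0..<k]
          @ [(d (p - k) 0 (xs ! k)) \<otimes>\<^bsub>G (p - k - 1)\<^esub> (xs ! (Suc k))]
          @ drop (Suc (Suc k)) xs)"

definition EG_degen ::
  "(nat \<Rightarrow> 'a monoid) \<Rightarrow> (nat \<Rightarrow> nat \<Rightarrow> 'a \<Rightarrow> 'a) \<Rightarrow> nat \<Rightarrow> 'a list \<Rightarrow> 'a list" where
  "EG_degen G s k xs = (let p = length xs - 1 in
     map (\<lambda>i. s (p - i) (k - i) (xs ! i)) [0..<Suc k] @ [\<one>\<^bsub>G (p - k)\<^esub>] @ drop (Suc k) xs)"

definition EG_degenerate ::
  "(nat \<Rightarrow> 'a monoid) \<Rightarrow> (nat \<Rightarrow> nat \<Rightarrow> 'a \<Rightarrow> 'a) \<Rightarrow> 'a list \<Rightarrow> bool" where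
  "EG_degenerate G s \<sigma> \<longleftrightarrow>
     (\<exists>q k y. y \<in> EG_simplices G q \<and> k \<le> q \<and> \<sigma> = EG_degen G s k y)"

text \<open>Normalized chains C_n(EG): finite integer combinations of nondegenerate n-simplices
  (the normalized chain group is free on the nondegenerate simplices; degenerate simplices are 0).\<close>
definition EG_chains ::
  "(nat \<Rightarrow> 'a monoid) \<Rightarrow> (nat \<Rightarrow> nat \<Rightarrow> 'a \<Rightarrow> 'a) \<Rightarrow> nat \<Rightarrow> ('a list \<Rightarrow> int) set" where
  "EG_chains G s n = {c. finite {\<sigma>. c \<sigma> \<noteq> 0} \<and>
     (\<forall>\<sigma>. c \<sigma> \<noteq> 0 \<longrightarrow> \<sigma> \<in> EG_simplices G n \<and> \<not> EG_degenerate G s \<sigma>)}"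

definition gen ::
  "(nat \<Rightarrow> 'a monoid) \<Rightarrow> (nat \<Rightarrow> nat \<Rightarrow> 'a \<Rightarrow> 'a) \<Rightarrow> 'a list \<Rightarrow> ('a list \<Rightarrow> int)" where
  "gen G s \<sigma> = (\<lambda>\<tau>. if \<tau> = \<sigma> \<and> \<not> EG_degenerate G s \<sigma> then 1 else 0)"

text \<open>Tensor products of normalized chains: C_k \<otimes> C_m is free on pairs of nondegenerate
  simplices; elements of (\<Oplus>_k C_k \<otimes> C_{n-k}) are integer functions on pairs (the degrees
  are recorded by the lengths of the simplices).\<close>
definition tensor :: "('b \<Rightarrow> int) \<Rightarrow> ('b \<Rightarrow> int) \<Rightarrow> ('b \<times> 'b \<Rightarrow> int)" where
  "tensor x y = (\<lambda>(\<sigma>, \<tau>). x \<sigma> * y \<tau>)"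

definition e0 :: "(nat \<Rightarrow> 'a monoid) \<Rightarrow> 'a list" where
  "e0 G = [\<one>\<^bsub>G 0\<^esub>]"

definition S_simp :: "(nat \<Rightarrow> 'a monoid) \<Rightarrow> 'a list \<Rightarrow> 'a list" where
  "S_simp G xs = \<one>\<^bsub>G (length xs)\<^esub> # xs"

definition S_chain ::
  "(nat \<Rightarrow> 'a monoid) \<Rightarrow> (nat \<Rightarrow> nat \<Rightarrow> 'a \<Rightarrow> 'a) \<Rightarrow> ('a list \<Rightarrow> int) \<Rightarrow> ('a list \<Rightarrow> int)" where
  "S_chain G s c = (\<lambda>\<tau>. \<Sum>\<sigma>\<in>{\<sigma>. c \<sigma> \<noteq> 0}. c \<sigma> * gen G s (S_simp G \<sigma>) \<tau>)"

definition S_tensor_id ::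
  "(nat \<Rightarrow> 'a monoid) \<Rightarrow> (nat \<Rightarrow> nat \<Rightarrow> 'a \<Rightarrow> 'a) \<Rightarrow> ('a list \<times> 'a list \<Rightarrow> int) \<Rightarrow> ('a list \<times> 'a list \<Rightarrow> int)" where
  "S_tensor_id G s x = (\<lambda>\<rho>. \<Sum>(\<sigma>, \<tau>)\<in>{\<pi>. x \<pi> \<noteq> 0}.
       x (\<sigma>, \<tau>) * tensor (gen G s (S_simp G \<sigma>)) (gen G s \<tau>) \<rho>)"

text \<open>Front face \<sigma>(0,...,k) = \<partial>_{k+1} ... \<partial>_n \<sigma> and back face \<sigma>(k,...,n) = \<partial>_0^k \<sigma>
  of an n-simplex \<sigma>.\<close>
definition front_face ::
  "(nat \<Rightarrow> 'a monoid) \<Rightarrow> (nat \<Rightarrow> nat \<Rightarrow> 'a \<Rightarrow> 'a) \<Rightarrow> nat \<Rightarrow> nat \<Rightarrow> 'a list \<Rightarrow> 'a list" where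
  "front_face G d n k = ((\<lambda>xs. EG_face G d (length xs - 1) xs) ^^ (n - k))"

definition back_face ::
  "(nat \<Rightarrow> 'a monoid) \<Rightarrow> (nat \<Rightarrow> nat \<Rightarrow> 'a \<Rightarrow> 'a) \<Rightarrow> nat \<Rightarrow> 'a list \<Rightarrow> 'a list" where
  "back_face G d k = (EG_face G d 0 ^^ k)"

definition P ::
  "(nat \<Rightarrow> 'a monoid) \<Rightarrow> (nat \<Rightarrow> nat \<Rightarrow> 'a \<Rightarrow> 'a) \<Rightarrow> (nat \<Rightarrow> nat \<Rightarrow> 'a \<Rightarrow> 'a)
     \<Rightarrow> nat \<Rightarrow> nat \<Rightarrow> ('a list \<Rightarrow> int) \<Rightarrow> ('a list \<times> 'a list \<Rightarrow> int)" where
  "P G d s n k c = (\<lambda>\<rho>. \<Sum>\<sigma>\<in>{\<sigma>. c \<sigma> \<noteq> 0}.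
       c \<sigma> * tensor (gen G s (front_face G d n k \<sigma>)) (gen G s (back_face G d k \<sigma>)) \<rho>)"

definition AW ::
  "(nat \<Rightarrow> 'a monoid) \<Rightarrow> (nat \<Rightarrow> nat \<Rightarrow> 'a \<Rightarrow> 'a) \<Rightarrow> (nat \<Rightarrow> nat \<Rightarrow> 'a \<Rightarrow> 'a)
     \<Rightarrow> nat \<Rightarrow> ('a list \<Rightarrow> int) \<Rightarrow> ('a list \<times> 'a list \<Rightarrow> int)" where
  "AW G d s n c = (\<lambda>\<rho>. \<Sum>k\<le>n. P G d s n k c \<rho>)"

end

theory Submission
  imports Defs
begin

text \<open>All operators involved are linear extensions of maps on simplices, so it suffices to check
  both identities on a generator \<open>\<sigma>\<close>. In \<open>EG\<close> the last face commutes with \<open>S\<close> (faces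
  fix \<open>1\<close>) and \<open>\<partial>\<^sub>0 S \<sigma> = \<sigma>\<close>, so \<open>(S\<sigma>)(0..k+1) = S(\<sigma>(0..k))\<close>,
  \<open>(S\<sigma>)(k+1..n+1) = \<sigma>(k..n)\<close> and \<open>(S\<sigma>)(0) = e\<^sub>0\<close>. Summing over \<open>k\<close> gives the
  formula for the Alexander--Whitney diagonal.\<close>

definition lin_ext :: "('b \<Rightarrow> 'c \<Rightarrow> 'r::comm_semiring_0) \<Rightarrow> ('b \<Rightarrow> 'r) \<Rightarrow> 'c \<Rightarrow> 'r" where
  "lin_ext f c = (\<lambda>\<rho>. \<Sum>\<sigma>\<in>{\<sigma>. c \<sigma> \<noteq> 0}. c \<sigma> * f \<sigma> \<rho>)"

lemma lin_ext_eq_sum: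
  assumes "finite A" "{\<sigma>. c \<sigma> \<noteq> 0} \<subseteq> A"
  shows "lin_ext f c \<rho> = (\<Sum>\<sigma>\<in>A. c \<sigma> * f \<sigma> \<rho>)"
  unfolding lin_ext_def by (rule sum.mono_neutral_left) (use assms in auto)

lemma lin_ext_cong:
  "(\<And>\<sigma>. c \<sigma> \<noteq> 0 \<Longrightarrow> f \<sigma> = g \<sigma>) \<Longrightarrow> lin_ext f c = lin_ext g c"
  unfolding lin_ext_def by (intro ext sum.cong) auto

lemma support_lin_ext_subset:
  "{\<rho>. lin_ext f c \<rho> \<noteq> 0} \<subseteq> (\<Union>\<sigma>\<in>{\<sigma>. c \<sigma> \<noteq> 0}. {\<rho>. f \<sigma> \<rho> \<noteq> 0})"
proof
  fix \<rho> assume "\<rho> \<in> {\<rho>. lin_ext f c \<rho> \<noteq> 0}"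
  then obtain \<sigma> where "c \<sigma> \<noteq> 0" "c \<sigma> * f \<sigma> \<rho> \<noteq> 0"
    unfolding lin_ext_def by (auto elim: sum.not_neutral_contains_not_neutral)
  then show "\<rho> \<in> (\<Union>\<sigma>\<in>{\<sigma>. c \<sigma> \<noteq> 0}. {\<rho>. f \<sigma> \<rho> \<noteq> 0})" by auto
qed

lemma finite_support_lin_ext:
  assumes "finite {\<sigma>. c \<sigma> \<noteq> 0}" "\<And>\<sigma>. c \<sigma> \<noteq> 0 \<Longrightarrow> finite {\<rho>. f \<sigma> \<rho> \<noteq> 0}"
  shows "finite {\<rho>. lin_ext f c \<rho> \<noteq> 0}"
  using assms by (intro finite_subset[OF support_lin_ext_subset]) auto

lemma lin_ext_lin_ext:
  assumes c: "finite {\<sigma>. c \<sigma> \<noteq> 0}" and f: "\<And>\<sigma>. c \<sigma> \<noteq> 0 \<Longrightarrow> finite {\<tau>. f \<sigma> \<tau> \<noteq> 0}"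
  shows "lin_ext g (lin_ext f c) = lin_ext (\<lambda>\<sigma>. lin_ext g (f \<sigma>)) c"
proof
  fix \<rho>
  define B where "B = (\<Union>\<sigma>\<in>{\<sigma>. c \<sigma> \<noteq> 0}. {\<tau>. f \<sigma> \<tau> \<noteq> 0})"
  have B: "finite B" using c f by (auto simp: B_def)
  have "lin_ext g (lin_ext f c) \<rho> = (\<Sum>\<tau>\<in>B. lin_ext f c \<tau> * g \<tau> \<rho>)"
    using B support_lin_ext_subset unfolding B_def by (rule lin_ext_eq_sum)
  also have "\<dots> = (\<Sum>\<sigma>\<in>{\<sigma>. c \<sigma> \<noteq> 0}. c \<sigma> * (\<Sum>\<tau>\<in>B. f \<sigma> \<tau> * g \<tau> \<rho>))"
    by (simp add: lin_ext_def sum_distrib_left sum_distrib_right mult.assoc sum.swap[of _ B])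
  also have "\<dots> = lin_ext (\<lambda>\<sigma>. lin_ext g (f \<sigma>)) c \<rho>"
    unfolding lin_ext_def[of _ c]
    by (intro sum.cong refl arg_cong2[where f = "(*)"] lin_ext_eq_sum[symmetric] B) (auto simp: B_def)
  finally show "lin_ext g (lin_ext f c) \<rho> = lin_ext (\<lambda>\<sigma>. lin_ext g (f \<sigma>)) c \<rho>" .
qed

lemma lin_ext_sum:
  assumes I: "finite I" and x: "\<And>i. i \<in> I \<Longrightarrow> finite {\<sigma>. x i \<sigma> \<noteq> 0}"
  shows "lin_ext f (\<lambda>\<sigma>. \<Sum>i\<in>I. x i \<sigma>) \<rho> = (\<Sum>i\<in>I. lin_ext f (x i) \<rho>)"
proof -
  define B where "B = (\<Union>i\<in>I. {\<sigma>. x i \<sigma> \<noteq> 0})"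
  have B: "finite B" using I x by (auto simp: B_def)
  have "lin_ext f (\<lambda>\<sigma>. \<Sum>i\<in>I. x i \<sigma>) \<rho> = (\<Sum>\<sigma>\<in>B. (\<Sum>i\<in>I. x i \<sigma>) * f \<sigma> \<rho>)"
    by (rule lin_ext_eq_sum[OF B]) (auto simp: B_def elim: sum.not_neutral_contains_not_neutral)
  also have "\<dots> = (\<Sum>i\<in>I. \<Sum>\<sigma>\<in>B. x i \<sigma> * f \<sigma> \<rho>)"
    by (simp add: sum_distrib_right sum.swap[of _ B])
  also have "\<dots> = (\<Sum>i\<in>I. lin_ext f (x i) \<rho>)"
    by (intro sum.cong refl lin_ext_eq_sum[symmetric] B) (auto simp: B_def)
  finally show ?thesis .
qed

lemma support_gen_subset: "{\<tau>. gen G s \<sigma> \<tau> \<noteq> 0} \<subseteq> {\<sigma>}"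
  by (auto simp: gen_def)

lemma gen_degenerate: "EG_degenerate G s \<sigma> \<Longrightarrow> gen G s \<sigma> = (\<lambda>_. 0)"
  by (auto simp: gen_def)

lemma lin_ext_gen:
  "lin_ext f (gen G s \<sigma>) = (if EG_degenerate G s \<sigma> then (\<lambda>_. 0) else f \<sigma>)"
proof (cases "EG_degenerate G s \<sigma>")
  case False
  then have "{\<tau>. gen G s \<sigma> \<tau> \<noteq> 0} = {\<sigma>}" by (auto simp: gen_def)
  with False show ?thesis by (auto simp: lin_ext_def gen_def)
qed (simp add: lin_ext_def gen_degenerate)

lemma tensor_zero_left [simp]: "tensor (\<lambda>_. 0) y = (\<lambda>_. 0)"
  and tensor_zero_right [simp]: "tensor x (\<lambda>_. 0) = (\<lambda>_. 0)"
  by (auto simp: tensor_def)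

lemma support_tensor_gen_subset: "{\<pi>. tensor (gen G s \<sigma>) (gen G s \<tau>) \<pi> \<noteq> 0} \<subseteq> {(\<sigma>, \<tau>)}"
  by (auto simp: tensor_def gen_def split: if_splits)

lemma lin_ext_tensor_gen:
  "lin_ext f (tensor (gen G s \<sigma>) (gen G s \<tau>)) =
     (if EG_degenerate G s \<sigma> \<or> EG_degenerate G s \<tau> then (\<lambda>_. 0) else f (\<sigma>, \<tau>))"
proof (cases "EG_degenerate G s \<sigma> \<or> EG_degenerate G s \<tau>")
  case False
  then have "{\<pi>. tensor (gen G s \<sigma>) (gen G s \<tau>) \<pi> \<noteq> 0} = {(\<sigma>, \<tau>)}"
    by (auto simp: tensor_def gen_def split: if_splits)
  with False show ?thesis by (auto simp: lin_ext_def tensor_def gen_def)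
qed (auto simp: lin_ext_def gen_degenerate)

lemma tensor_lin_ext: "tensor x (lin_ext f c) = lin_ext (\<lambda>\<sigma>. tensor x (f \<sigma>)) c"
  by (auto simp: tensor_def lin_ext_def sum_distrib_left mult.left_commute)

lemma S_chain_eq_lin_ext: "S_chain G s = lin_ext (\<lambda>\<sigma>. gen G s (S_simp G \<sigma>))"
  unfolding S_chain_def lin_ext_def ..

lemma P_eq_lin_ext:
  "P G d s n k = lin_ext (\<lambda>\<sigma>. tensor (gen G s (front_face G d n k \<sigma>)) (gen G s (back_face G d k \<sigma>)))"
  unfolding P_def lin_ext_def ..

lemma S_tensor_id_eq_lin_ext:
  "S_tensor_id G s = lin_ext (\<lambda>(\<sigma>, \<tau>). tensor (gen G s (S_simp G \<sigma>)) (gen G s \<tau>))"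
  unfolding S_tensor_id_def lin_ext_def by (simp add: split_def)

lemma P_gen:
  "P G d s n k (gen G s \<sigma>) = (if EG_degenerate G s \<sigma> then (\<lambda>_. 0)
     else tensor (gen G s (front_face G d n k \<sigma>)) (gen G s (back_face G d k \<sigma>)))"
  unfolding P_eq_lin_ext lin_ext_gen ..

lemma finite_support_P:
  "finite {\<sigma>. c \<sigma> \<noteq> 0} \<Longrightarrow> finite {\<pi>. P G d s n k c \<pi> \<noteq> 0}"
  unfolding P_eq_lin_ext
  by (rule finite_support_lin_ext) (auto intro: finite_subset[OF support_tensor_gen_subset])

lemma P_S_chain:
  assumes "finite {\<sigma>. c \<sigma> \<noteq> 0}"
  shows "P G d s m k (S_chain G s c) = lin_ext (\<lambda>\<sigma>. P G d s m k (gen G s (S_simp G \<sigma>))) c"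
  unfolding S_chain_eq_lin_ext P_eq_lin_ext[of G d s m k]
  by (rule lin_ext_lin_ext[OF assms]) (auto intro: finite_subset[OF support_gen_subset])

lemma tensor_S_chain: "tensor x (S_chain G s c) = lin_ext (\<lambda>\<sigma>. tensor x (gen G s (S_simp G \<sigma>))) c"
  unfolding S_chain_eq_lin_ext by (rule tensor_lin_ext)

lemma S_tensor_id_P:
  assumes "c \<in> EG_chains G s n"
  shows "S_tensor_id G s (P G d s n k c) = lin_ext (\<lambda>\<sigma>. S_tensor_id G s (P G d s n k (gen G s \<sigma>))) c"
proof -
  have "S_tensor_id G s (P G d s n k c) = lin_ext (\<lambda>\<sigma>. S_tensor_id G s
      (tensor (gen G s (front_face G d n k \<sigma>)) (gen G s (back_face G d k \<sigma>)))) c"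
    using assms unfolding P_eq_lin_ext S_tensor_id_eq_lin_ext[of G s] EG_chains_def
    by (intro lin_ext_lin_ext) (auto intro: finite_subset[OF support_tensor_gen_subset])
  also have "\<dots> = lin_ext (\<lambda>\<sigma>. S_tensor_id G s (P G d s n k (gen G s \<sigma>))) c"
    using assms by (intro lin_ext_cong) (simp add: P_gen EG_chains_def)
  finally show ?thesis .
qed

lemma S_tensor_id_AW:
  assumes "finite {\<sigma>. c \<sigma> \<noteq> 0}"
  shows "S_tensor_id G s (AW G d s n c) \<rho> = (\<Sum>k\<le>n. S_tensor_id G s (P G d s n k c) \<rho>)"
  unfolding AW_def S_tensor_id_eq_lin_ext using finite_support_P[OF assms]
  by (intro lin_ext_sum) auto

lemma length_EG_simplices: "\<sigma> \<in> EG_simplices G n \<Longrightarrow> length \<sigma> = Suc n"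
  by (simp add: EG_simplices_def)

lemma Cons_EG_simplices_iff:
  "a # y \<in> EG_simplices G (Suc q) \<longleftrightarrow> a \<in> carrier (G (Suc q)) \<and> y \<in> EG_simplices G q"
  (is "?lhs \<longleftrightarrow> ?rhs")
proof
  assume ?lhs
  then have "\<forall>i\<le>Suc q. (a # y) ! i \<in> carrier (G (Suc q - i))" "length y = Suc q"
    by (simp_all add: EG_simplices_def)
  then show ?rhs
    by (fastforce simp: EG_simplices_def dest: spec[of _ 0] spec[of _ "Suc _"])
next
  assume ?rhs
  then show ?lhs by (auto simp: EG_simplices_def nth_Cons split: nat.split)
qed

definition last_face :: "(nat \<Rightarrow> 'a monoid) \<Rightarrow> (nat \<Rightarrow> nat \<Rightarrow> 'a \<Rightarrow> 'a) \<Rightarrow> 'a list \<Rightarrow> 'a list" where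
  "last_face G d xs = EG_face G d (length xs - 1) xs"

lemma front_face_eq_funpow_last_face: "front_face G d n k = last_face G d ^^ (n - k)"
  unfolding front_face_def last_face_def ..

lemma last_face_eq:
  "last_face G d xs = map (\<lambda>i. d (length xs - 1 - i) (length xs - 1 - i) (xs ! i)) [0..<length xs - 1]"
  unfolding last_face_def EG_face_def Let_def by simp

lemma length_funpow_last_face: "length ((last_face G d ^^ j) xs) = length xs - j"
  by (induction j) (simp_all add: last_face_eq)

lemma tl_EG_degen_Suc:
  "length y = Suc q \<Longrightarrow> k \<le> q \<Longrightarrow> tl (EG_degen G s (Suc k) (a # y)) = EG_degen G s k y"
  unfolding EG_degen_def Let_def by (simp add: map_upt_Suc del: upt_Suc)

lemma degenerate_S_simp_imp:
  assumes \<sigma>: "\<sigma> \<in> EG_simplices G n" and deg: "EG_degenerate G s (S_simp G \<sigma>)"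
  shows "\<sigma> ! 0 = \<one>\<^bsub>G n\<^esub> \<or> EG_degenerate G s \<sigma>"
proof -
  obtain q k y where y: "y \<in> EG_simplices G q" and k: "k \<le> q" and Sy: "S_simp G \<sigma> = EG_degen G s k y"
    using deg unfolding EG_degenerate_def by blast
  have "length (S_simp G \<sigma>) = Suc (Suc q)"
    unfolding Sy EG_degen_def Let_def using length_EG_simplices[OF y] k by simp
  then have q: "q = n" using length_EG_simplices[OF \<sigma>] by (simp add: S_simp_def)
  show ?thesis
  proof (cases k)
    case 0
    have "\<sigma> ! 0 = S_simp G \<sigma> ! 1" by (simp add: S_simp_def)
    also have "\<dots> = \<one>\<^bsub>G n\<^esub>"
      unfolding Sy EG_degen_def Let_def 0 using length_EG_simplices[OF y] q by simp
    finally show ?thesis ..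
  next
    case (Suc k')
    then obtain q' a y' where q': "q = Suc q'" and y': "y = a # y'"
      using k length_EG_simplices[OF y] by (cases q; cases y) auto
    have y'_simp: "y' \<in> EG_simplices G q'" using y unfolding y' q' Cons_EG_simplices_iff by simp
    have "\<sigma> = tl (S_simp G \<sigma>)" by (simp add: S_simp_def)
    also have "\<dots> = EG_degen G s k' y'"
      unfolding Sy y' Suc using tl_EG_degen_Suc length_EG_simplices[OF y'_simp] k Suc q' by simp
    finally have "EG_degenerate G s \<sigma>"
      unfolding EG_degenerate_def using y'_simp k Suc q' by auto
    then show ?thesis ..
  qed
qed

context
  fixes G :: "nat \<Rightarrow> 'a monoid" and d s
  assumes sg: "simplicial_group G d s"
begin

lemma group_G: "group (G p)"
  using sg by (simp add: simplicial_group_def)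

lemma face_one: "k \<le> Suc p \<Longrightarrow> d (Suc p) k \<one>\<^bsub>G (Suc p)\<^esub> = \<one>\<^bsub>G p\<^esub>"
  using sg unfolding simplicial_group_def by (metis hom_one)

lemma degen_one: "k \<le> p \<Longrightarrow> s p k \<one>\<^bsub>G p\<^esub> = \<one>\<^bsub>G (Suc p)\<^esub>"
  using sg unfolding simplicial_group_def by (metis hom_one)

lemma face_closed: "k \<le> Suc p \<Longrightarrow> x \<in> carrier (G (Suc p)) \<Longrightarrow> d (Suc p) k x \<in> carrier (G p)"
  using sg unfolding simplicial_group_def by (metis hom_in_carrier)

lemma S_simp_simplices: "y \<in> EG_simplices G q \<Longrightarrow> S_simp G y \<in> EG_simplices G (Suc q)"
  using group.is_monoid[OF group_G]
  by (simp add: S_simp_def Cons_EG_simplices_iff length_EG_simplices)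

lemma last_face_S_simp: "xs \<noteq> [] \<Longrightarrow> last_face G d (S_simp G xs) = S_simp G (last_face G d xs)"
  by (cases xs) (simp_all add: last_face_eq S_simp_def map_upt_Suc face_one del: upt_Suc)

lemma funpow_last_face_S_simp:
  "j < length xs \<Longrightarrow> (last_face G d ^^ j) (S_simp G xs) = S_simp G ((last_face G d ^^ j) xs)"
proof (induction j)
  case (Suc j)
  then have "(last_face G d ^^ j) xs \<noteq> []"
    by (metis length_funpow_last_face Suc_lessD less_imp_neq zero_less_diff list.size(3))
  with Suc show ?case by (simp add: last_face_S_simp)
qed simp

lemma last_face_simplices:
  assumes xs: "xs \<in> EG_simplices G (Suc p)"
  shows "last_face G d xs \<in> EG_simplices G p"
    and "xs ! 0 = \<one>\<^bsub>G (Suc p)\<^esub> \<Longrightarrow> last_face G d xs ! 0 = \<one>\<^bsub>G p\<^esub>"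
proof -
  have len: "length xs = Suc (Suc p)" using length_EG_simplices[OF xs] .
  have "d (Suc p - i) (Suc p - i) (xs ! i) \<in> carrier (G (p - i))" if i: "i \<le> p" for i
  proof -
    have "Suc p - i = Suc (p - i)" using i by simp
    moreover have "xs ! i \<in> carrier (G (Suc p - i))" using xs i by (simp add: EG_simplices_def)
    ultimately show ?thesis using face_closed by simp
  qed
  then show "last_face G d xs \<in> EG_simplices G p"
    unfolding EG_simplices_def last_face_eq using len by (simp del: upt_Suc)
  show "last_face G d xs ! 0 = \<one>\<^bsub>G p\<^esub>" if "xs ! 0 = \<one>\<^bsub>G (Suc p)\<^esub>"
    unfolding last_face_eq using len that face_one[of "Suc p" p] by (simp del: upt_Suc)
qed

lemma funpow_last_face_simplices:
  "xs \<in> EG_simplices G (m + j) \<Longrightarrow> (last_face G d ^^ j) xs \<in> EG_simplices G m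
     \<and> (xs ! 0 = \<one>\<^bsub>G (m + j)\<^esub> \<longrightarrow> (last_face G d ^^ j) xs ! 0 = \<one>\<^bsub>G m\<^esub>)"
proof (induction j arbitrary: m)
  case (Suc j)
  then show ?case using Suc.IH[of "Suc m"] last_face_simplices[of "(last_face G d ^^ j) xs" m] by simp
qed simp

lemma front_face_simplices:
  assumes "\<sigma> \<in> EG_simplices G n" "k \<le> n"
  shows "front_face G d n k \<sigma> \<in> EG_simplices G k"
    and "\<sigma> ! 0 = \<one>\<^bsub>G n\<^esub> \<Longrightarrow> front_face G d n k \<sigma> ! 0 = \<one>\<^bsub>G k\<^esub>"
  using funpow_last_face_simplices[of \<sigma> k "n - k"] assms
  by (simp_all add: front_face_eq_funpow_last_face)

lemma front_face_S_simp_Suc: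
  assumes "\<sigma> \<in> EG_simplices G n" "j \<le> n"
  shows "front_face G d (Suc n) (Suc j) (S_simp G \<sigma>) = S_simp G (front_face G d n j \<sigma>)"
  using funpow_last_face_S_simp[of "n - j" \<sigma>] length_EG_simplices[OF assms(1)] assms(2)
  by (simp add: front_face_eq_funpow_last_face)

lemma front_face_S_simp_0:
  assumes \<sigma>: "\<sigma> \<in> EG_simplices G n"
  shows "front_face G d (Suc n) 0 (S_simp G \<sigma>) = e0 G"
proof -
  obtain x where x: "front_face G d n 0 \<sigma> = [x]"
    using length_EG_simplices[OF front_face_simplices(1)[OF \<sigma>, of 0]]
    by (auto simp: length_Suc_conv)
  have "front_face G d (Suc n) 0 (S_simp G \<sigma>) = last_face G d (front_face G d (Suc n) 1 (S_simp G \<sigma>))"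
    by (simp add: front_face_eq_funpow_last_face)
  also have "\<dots> = last_face G d (S_simp G [x])"
    using front_face_S_simp_Suc[OF \<sigma>, of 0] x by simp
  also have "\<dots> = e0 G"
    using face_one[of 1 0] by (simp add: last_face_eq S_simp_def e0_def)
  finally show ?thesis .
qed

lemma first_face_S_simp:
  assumes "\<sigma> \<in> EG_simplices G n"
  shows "EG_face G d 0 (S_simp G \<sigma>) = \<sigma>"
proof -
  obtain x \<tau> where \<sigma>: "\<sigma> = x # \<tau>" and x: "x \<in> carrier (G n)" and len: "length \<tau> = n"
    using assms by (cases \<sigma>) (auto simp: EG_simplices_def dest: spec[of _ 0])
  have "d (Suc n) 0 \<one>\<^bsub>G (Suc n)\<^esub> \<otimes>\<^bsub>G n\<^esub> x = x"
    using face_one[of 0 n] x group.is_monoid[OF group_G] by (simp add: monoid.l_one)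
  then show ?thesis unfolding EG_face_def S_simp_def Let_def \<sigma> using len by simp
qed

lemma back_face_S_simp_Suc:
  "\<sigma> \<in> EG_simplices G n \<Longrightarrow> back_face G d (Suc j) (S_simp G \<sigma>) = back_face G d j \<sigma>"
  unfolding back_face_def by (simp add: funpow_Suc_right first_face_S_simp del: funpow.simps)

text \<open>\<open>S (s\<^sub>k y) = s\<^bsub>k+1\<^esub> (S y)\<close>, and \<open>S y = s\<^sub>0 y\<close> when \<open>y\<close> starts with \<open>1\<close>.\<close>

lemma degenerate_S_simp: "EG_degenerate G s y \<Longrightarrow> EG_degenerate G s (S_simp G y)"
proof -
  assume "EG_degenerate G s y"
  then obtain q k x where x: "x \<in> EG_simplices G q" and k: "k \<le> q" and y: "y = EG_degen G s k x"
    unfolding EG_degenerate_def by blast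
  have "S_simp G y = EG_degen G s (Suc k) (S_simp G x)"
    unfolding y EG_degen_def S_simp_def Let_def using length_EG_simplices[OF x] k
    by (simp add: map_upt_Suc degen_one del: upt_Suc)
  then show ?thesis unfolding EG_degenerate_def using S_simp_simplices[OF x] k by fastforce
qed

lemma degenerate_S_simp_hd_one:
  assumes y: "y \<in> EG_simplices G q" and y0: "y ! 0 = \<one>\<^bsub>G q\<^esub>"
  shows "EG_degenerate G s (S_simp G y)"
proof -
  obtain \<tau> where "y = \<one>\<^bsub>G q\<^esub> # \<tau>" "length \<tau> = q"
    using y0 length_EG_simplices[OF y] by (cases y) auto
  then have "S_simp G y = EG_degen G s 0 y"
    unfolding EG_degen_def S_simp_def Let_def by (simp add: degen_one)
  then show ?thesis unfolding EG_degenerate_def using y by fastforce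
qed

lemma S_tensor_id_tensor_gen:
  "S_tensor_id G s (tensor (gen G s \<sigma>) (gen G s \<tau>)) = tensor (gen G s (S_simp G \<sigma>)) (gen G s \<tau>)"
  unfolding S_tensor_id_eq_lin_ext lin_ext_tensor_gen
  by (auto simp: gen_degenerate degenerate_S_simp)

lemma P_gen_S_simp_0:
  assumes "\<sigma> \<in> EG_simplices G n"
  shows "P G d s (Suc n) 0 (gen G s (S_simp G \<sigma>)) = tensor (gen G s (e0 G)) (gen G s (S_simp G \<sigma>))"
  using assms by (simp add: P_gen front_face_S_simp_0 back_face_def gen_degenerate)

text \<open>If \<open>S \<sigma>\<close> is degenerate although \<open>\<sigma>\<close> is not, then \<open>\<sigma>\<close> starts with \<open>1\<close>, hence so do its
  front faces, and both sides vanish in the normalized chains.\<close>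

lemma P_gen_S_simp_Suc:
  assumes \<sigma>: "\<sigma> \<in> EG_simplices G n" and nondeg: "\<not> EG_degenerate G s \<sigma>" and j: "j \<le> n"
  shows "P G d s (Suc n) (Suc j) (gen G s (S_simp G \<sigma>)) = S_tensor_id G s (P G d s n j (gen G s \<sigma>))"
proof (cases "EG_degenerate G s (S_simp G \<sigma>)")
  case True
  then have "\<sigma> ! 0 = \<one>\<^bsub>G n\<^esub>" using degenerate_S_simp_imp[OF \<sigma>] nondeg by blast
  then have "EG_degenerate G s (S_simp G (front_face G d n j \<sigma>))"
    using front_face_simplices[OF \<sigma> j] by (intro degenerate_S_simp_hd_one)
  with True nondeg show ?thesis by (simp add: P_gen S_tensor_id_tensor_gen, simp add: gen_degenerate)
next
  case False
  with nondeg show ?thesis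
    by (simp add: P_gen S_tensor_id_tensor_gen front_face_S_simp_Suc[OF \<sigma> j] back_face_S_simp_Suc[OF \<sigma>])
qed

lemma P_S_chain_0:
  assumes "c \<in> EG_chains G s n"
  shows "P G d s (Suc n) 0 (S_chain G s c) = tensor (gen G s (e0 G)) (S_chain G s c)"
  using assms unfolding EG_chains_def tensor_S_chain
  by (simp add: P_S_chain P_gen_S_simp_0 cong: lin_ext_cong)

lemma P_S_chain_Suc:
  assumes "c \<in> EG_chains G s n" "j \<le> n"
  shows "P G d s (Suc n) (Suc j) (S_chain G s c) = S_tensor_id G s (P G d s n j c)"
  using assms unfolding S_tensor_id_P[OF assms(1)] EG_chains_def
  by (simp add: P_S_chain P_gen_S_simp_Suc cong: lin_ext_cong)

end

theorem lemma8p2: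
  assumes "simplicial_group G d s"
    and "c \<in> EG_chains G s n"
  shows "(\<forall>k \<le> Suc n. P G d s (Suc n) k (S_chain G s c) =
           (if k = 0 then tensor (gen G s (e0 G)) (S_chain G s c)
            else S_tensor_id G s (P G d s n (k - 1) c))) \<and>
         AW G d s (Suc n) (S_chain G s c) =
           (\<lambda>\<rho>. S_tensor_id G s (AW G d s n c) \<rho> + tensor (gen G s (e0 G)) (S_chain G s c) \<rho>)"
proof
  show "\<forall>k \<le> Suc n. P G d s (Suc n) k (S_chain G s c) =
           (if k = 0 then tensor (gen G s (e0 G)) (S_chain G s c)
            else S_tensor_id G s (P G d s n (k - 1) c))"
    using P_S_chain_0[OF assms] P_S_chain_Suc[OF assms] by (auto simp: le_Suc_eq gr0_conv_Suc)
  show "AW G d s (Suc n) (S_chain G s c) =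
           (\<lambda>\<rho>. S_tensor_id G s (AW G d s n c) \<rho> + tensor (gen G s (e0 G)) (S_chain G s c) \<rho>)"
  proof
    fix \<rho>
    have "AW G d s (Suc n) (S_chain G s c) \<rho> = P G d s (Suc n) 0 (S_chain G s c) \<rho>
        + (\<Sum>j\<le>n. P G d s (Suc n) (Suc j) (S_chain G s c) \<rho>)"
      unfolding AW_def by (simp add: sum.atMost_Suc_shift del: sum.atMost_Suc)
    also have "\<dots> = tensor (gen G s (e0 G)) (S_chain G s c) \<rho> + S_tensor_id G s (AW G d s n c) \<rho>"
      using assms(2) by (simp add: P_S_chain_0[OF assms] P_S_chain_Suc[OF assms] S_tensor_id_AW EG_chains_def)
    finally show "AW G d s (Suc n) (S_chain G s c) \<rho> =
        S_tensor_id G s (AW G d s n c) \<rho> + tensor (gen G s (e0 G)) (S_chain G s c) \<rho>" by simp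
  qed
qed

end
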